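(* Let $\mathcal{H}_O\simeq\mathbb{C}^{d_O}$ and $\mathcal{H}_R\simeq\mathbb{C}^{d_R}$. Let $H_R=\sum_{m=1}^{d_R}\lambda_m^{\uparrow}|\xi_m\rangle\langle\xi_m|$ with $\lambda_1^\uparrow\leqslant\dots\leqslant\lambda_{d_R}^\uparrow$ and $\{|\xi_m\rangle\}$ an orthonormal basis; let $\beta\in(0,\infty)$ and $\rho_R(\beta)=e^{-\beta H_R}/\mathrm{tr}[e^{-\beta H_R}]=\sum_m r_m^{\downarrow}|\xi_m\rangle\langle\xi_m|$. Let $\rho_O=\sum_{l=1}^{d_O}o_l^{\downarrow}|\varphi_l\rangle\langle\varphi_l|$ with $o_1^\downarrow\geqslant\dots\geqslant o_{d_O}^\downarrow$ and $\{|\varphi_l\rangle\}$ an orthonormal basis, and $\rho=\rho_O\otimes\rho_R(\beta)$. Let $p_{\varphi_1}^{\max}$ be the sum of the $d_R$ largest numbers among $\{o_l^\downarrow r_m^\downarrow\}_{l,m}$ (counted with multiplicity). Consider the following sequential swap algorithm, which applies a sequence of unitaries to $\rho$; throughout, the current state is diagonal in the basis $\{|\varphi_l\rangle\otimes|\xi_m\rangle\}$ and $p_{l,m}$ denotes its current diagonal entry at $|\varphi_l\rangle\otimes|\xi_m\rangle$ (initially $p_{l,m}=o_l^\downarrow r_m^\downarrow$). For $i=2,3,\dots,d_R$ (outer loop), for $m=d_R,d_R-1,\dots,1$ (middle loop), for $l=d_O,d_O-1,\dots,2$ (inner loop): if $p_{1,i}<p_{l,m}$, apply the unitary that swaps the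 basis vectors $|\varphi_1\rangle\otimes|\xi_i\rangle$ and $|\varphi_l\rangle\otimes|\xi_m\rangle$ and acts as the identity on all other basis vectors (this exchanges $p_{1,i}$ and $p_{l,m}$); otherwise do nothing. Let $\rho^{(j)}$ be the state after the $j$-th swap actually performed ($\rho^{(0)}=\rho$), $\rho_O^{(j)}=\mathrm{tr}_R[\rho^{(j)}]$, $\delta_j=p_{\varphi_1}^{\max}-\langle\varphi_1|\rho_O^{(j)}|\varphi_1\rangle$, and $\Delta Q_j=\mathrm{tr}[H_R(\mathrm{tr}_O[\rho^{(j)}]-\rho_R(\beta))]$. Then $(\delta_j)_j$ is non-increasing, $(\Delta Q_j)_j$ is non-decreasing, and for every $j$ the state $\rho_O^{(j)}$ is passive with respect to the ordered basis $(|\varphi_l\rangle)_l$, i.e. it is diagonal in this basis and $\langle\varphi_a|\rho_O^{(j)}|\varphi_a\rangle\geqslant\langle\varphi_b|\rho_O^{(j)}|\varphi_b\rangle$ whenever $a<b$.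
   Context: $\mathrm{tr}_O,\mathrm{tr}_R$ denote partial traces over $\mathcal{H}_O$ and $\mathcal{H}_R$. In the paper the basis $(|\varphi_l\rangle)_l$ is thought of as the eigenbasis of an object Hamiltonian in increasing order of energy, which is what makes this notion "passive". *)

theory Defs
  imports "Jordan_Normal_Form.Schur_Decomposition"
begin

(* Conventions: H_O = C^dO, H_R = C^dR, H_O \<otimes> H_R = C^(dO*dR) with the
   product index  a*dR + b  for  e_a \<otimes> e_b.  All indices are 0-based:
   paper index k corresponds to k-1 here. *)

definition ketbra :: "complex vec \<Rightarrow> complex vec \<Rightarrow> complex mat" where
  "ketbra v w = mat (dim_vec v) (dim_vec w) (\<lambda>(i,j). v $ i * cnj (w $ j))"

definition braket :: "complex vec \<Rightarrow> complex mat \<Rightarrow> complex vec \<Rightarrow> complex" where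
  "braket v M w = (M *\<^sub>v w) \<bullet>c v"

definition tensor_vec :: "nat \<Rightarrow> nat \<Rightarrow> complex vec \<Rightarrow> complex vec \<Rightarrow> complex vec" where
  "tensor_vec dO dR v w = vec (dO*dR) (\<lambda>k. v $ (k div dR) * w $ (k mod dR))"

definition tensor_mat :: "nat \<Rightarrow> nat \<Rightarrow> complex mat \<Rightarrow> complex mat \<Rightarrow> complex mat" where
  "tensor_mat dO dR A B = mat (dO*dR) (dO*dR)
     (\<lambda>(i,j). A $$ (i div dR, j div dR) * B $$ (i mod dR, j mod dR))"

definition mtrace :: "complex mat \<Rightarrow> complex" where
  "mtrace M = (\<Sum>i<dim_row M. M $$ (i, i))"

definition ptrace_R :: "nat \<Rightarrow> nat \<Rightarrow> complex mat \<Rightarrow> complex mat" where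
  "ptrace_R dO dR M = mat dO dO (\<lambda>(i,j). \<Sum>m<dR. M $$ (i*dR + m, j*dR + m))"

definition ptrace_O :: "nat \<Rightarrow> nat \<Rightarrow> complex mat \<Rightarrow> complex mat" where
  "ptrace_O dO dR M = mat dR dR (\<lambda>(i,j). \<Sum>l<dO. M $$ (l*dR + i, l*dR + j))"

definition orthonormal_basis :: "nat \<Rightarrow> (nat \<Rightarrow> complex vec) \<Rightarrow> bool" where
  "orthonormal_basis d e \<longleftrightarrow> (\<forall>k<d. e k \<in> carrier_vec d) \<and>
     (\<forall>a<d. \<forall>b<d. e a \<bullet>c e b = (if a = b then 1 else 0))"

definition spectral :: "nat \<Rightarrow> (nat \<Rightarrow> real) \<Rightarrow> (nat \<Rightarrow> complex vec) \<Rightarrow> complex mat" where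
  "spectral d c e = mat d d (\<lambda>(i,j). \<Sum>k<d. complex_of_real (c k) * (e k $ i * cnj (e k $ j)))"

(* Gibbs weights r_m = exp(-\<beta> \<lambda>_m) / \<Sum>_k exp(-\<beta> \<lambda>_k), the eigenvalues of e^{-\<beta>H_R}/tr e^{-\<beta>H_R} *)
definition gibbs_weights :: "nat \<Rightarrow> real \<Rightarrow> (nat \<Rightarrow> real) \<Rightarrow> nat \<Rightarrow> real" where
  "gibbs_weights dR \<beta> E m = exp (- \<beta> * E m) / (\<Sum>k<dR. exp (- \<beta> * E k))"

definition swap_unitary :: "nat \<Rightarrow> complex vec \<Rightarrow> complex vec \<Rightarrow> complex mat" where
  "swap_unitary n a b = 1\<^sub>m n - ketbra a a - ketbra b b + ketbra a b + ketbra b a"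

definition sum_largest :: "nat \<Rightarrow> real list \<Rightarrow> real" where
  "sum_largest d xs = sum_list (take d (rev (sort xs)))"

(* A step (i,m,l) compares the current diagonal entries
   p_{1,i} (at \<phi>_1\<otimes>\<xi>_i) and p_{l,m} (at \<phi>_l\<otimes>\<xi>_m) and swaps if p_{1,i} < p_{l,m}.
   swap_run returns the list [\<rho>^(0), \<rho>^(1), ...] of states after each swap actually performed. *)
definition swap_steps :: "nat \<Rightarrow> nat \<Rightarrow> (nat \<times> nat \<times> nat) list" where
  "swap_steps dO dR = [(i,m,l). i \<leftarrow> [1..<dR], m \<leftarrow> rev [0..<dR], l \<leftarrow> rev [1..<dO]]"

fun swap_run :: "nat \<Rightarrow> nat \<Rightarrow> (nat \<Rightarrow> complex vec) \<Rightarrow> (nat \<Rightarrow> complex vec)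
    \<Rightarrow> (nat \<times> nat \<times> nat) list \<Rightarrow> complex mat \<Rightarrow> complex mat list" where
  "swap_run dO dR \<phi> \<xi> [] \<rho> = [\<rho>]"
| "swap_run dO dR \<phi> \<xi> ((i,m,l) # ss) \<rho> =
     (let a = tensor_vec dO dR (\<phi> 0) (\<xi> i);
          b = tensor_vec dO dR (\<phi> l) (\<xi> m);
          U = swap_unitary (dO*dR) a b
      in if Re (braket a \<rho> a) < Re (braket b \<rho> b)
         then \<rho> # swap_run dO dR \<phi> \<xi> ss (U * \<rho> * mat_adjoint U)
         else swap_run dO dR \<phi> \<xi> ss \<rho>)"

definition passive_wrt :: "nat \<Rightarrow> (nat \<Rightarrow> complex vec) \<Rightarrow> complex mat \<Rightarrow> bool" where
  "passive_wrt d e M \<longleftrightarrow>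
     (\<forall>a<d. \<forall>b<d. a \<noteq> b \<longrightarrow> braket (e a) M (e b) = 0) \<and>
     (\<forall>a<d. \<forall>b<d. a < b \<longrightarrow> Re (braket (e b) M (e b)) \<le> Re (braket (e a) M (e a)))"

end

(*
  Every state produced by the algorithm is diagonal in the product basis \<phi>_l \<otimes> \<xi>_m: the
  initial state is, and conjugating by the swap of two basis vectors exchanges two diagonal
  entries. So the algorithm permutes the array p_{l,m}, and the three quantities are read off
  from it: <\<phi>_1|\<rho>_O|\<phi>_1> is the sum of row 1, \<Delta>Q is the E_m-weighted sum of all entries
  minus a constant, and \<rho>_O is diagonal with the row sums on its diagonal.

  In stage i, the entries outside row 1 in columns m \<ge> i still hold their initial values
  o_l r_m \<le> o_1 r_i, so swaps only happen for m < i. A swap raises p_{1,i}, hence the row-1 sum,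
  and moves the weight p_{l,m} - p_{1,i} > 0 from column m to column i of higher energy, so \<Delta>Q
  does not decrease. Since the inner loop runs l downwards, the value pushed into row l lies
  between the entries above and below it, so every column stays sorted outside row 1; and the
  row-2 sum only decreases. Hence the row sums stay non-increasing, which is passivity.
*)

theory Submission
  imports Defs
begin

lemma sum_lessThan_mult_split:
  fixes f :: "nat \<Rightarrow> 'a::comm_monoid_add"
  shows "(\<Sum>k<a*b. f k) = (\<Sum>l<a. \<Sum>m<b. f (l*b+m))"
proof -
  have "(\<Sum>k<a*b. f k) = (\<Sum>l<a. sum f {l*b..<l*b+b})"
    using sum.nat_group[of f b a, symmetric] by (simp add: mult.commute)
  also have "\<dots> = (\<Sum>l<a. \<Sum>m<b. f (l*b+m))"
  proof (rule sum.cong[OF refl])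
    fix l
    have "sum f {l*b..<l*b+b} = sum f {0+l*b..<b+l*b}" by (simp add: add.commute)
    also have "\<dots> = (\<Sum>m<b. f (m + l*b))" by (simp only: sum.shift_bounds_nat_ivl atLeast0LessThan)
    finally show "sum f {l*b..<l*b+b} = (\<Sum>m<b. f (l*b+m))" by (simp add: add.commute)
  qed
  finally show ?thesis .
qed

lemma sum_swap3:
  fixes F :: "'a \<Rightarrow> 'b \<Rightarrow> 'c \<Rightarrow> 'd::comm_monoid_add"
  shows "(\<Sum>x\<in>A. \<Sum>y\<in>B. \<Sum>z\<in>C. F x y z) = (\<Sum>y\<in>B. \<Sum>z\<in>C. \<Sum>x\<in>A. F x y z)"
  by (subst sum.swap) (simp add: sum.swap[of _ A C])

lemma sum_update_at:
  fixes f :: "'a \<Rightarrow> 'b::ab_group_add"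
  assumes "finite A" "x \<in> A"
  shows "(\<Sum>y\<in>A. if y = x then v else f y) = sum f A - f x + v"
proof -
  have "(\<Sum>y\<in>A. if y = x then v else f y) = v + sum f (A - {x})"
    using assms by (simp add: sum.remove[of A x])
  then show ?thesis using assms by (simp add: sum_diff1)
qed

lemma sum_remove2:
  fixes g :: "'a \<Rightarrow> 'b::comm_monoid_add"
  assumes "finite A" "a \<in> A" "b \<in> A" "a \<noteq> b"
  shows "sum g A = g a + g b + sum g (A - {a, b})"
  using assms by (simp add: sum.remove[of A a] sum.remove[of "A - {a}" b] Diff_insert2[symmetric] add.assoc)

lemma index_mult_add_less:
  assumes "l < (dO::nat)" "m < dR"
  shows "l*dR + m < dO*dR"
proof -
  have "l*dR + m < Suc l * dR" using assms(2) by simp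
  also have "\<dots> \<le> dO * dR" using assms(1) by (intro mult_right_mono) auto
  finally show ?thesis .
qed

lemma eq_mult_add_iff:
  assumes "m < dR"
  shows "k = l*dR + m \<longleftrightarrow> k div dR = l \<and> k mod dR = (m::nat)"
proof
  assume "k = l*dR + m"
  then show "k div dR = l \<and> k mod dR = m" using assms by simp
next
  assume "k div dR = l \<and> k mod dR = m"
  then show "k = l*dR + m" using div_mult_mod_eq[of k dR] by simp
qed

section \<open>Spectral sums\<close>

lemma mat_adjoint_dims [simp]:
  "dim_row (mat_adjoint A) = dim_col A" "dim_col (mat_adjoint A) = dim_row A"
  by (simp_all add: mat_adjoint_def mat_of_rows_def)

lemma mat_adjoint_index:
  "i < dim_col A \<Longrightarrow> j < dim_row A \<Longrightarrow> mat_adjoint A $$ (i,j) = cnj (A $$ (j,i))"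
  by (simp add: mat_adjoint_def mat_of_rows_def)

lemma cscalar_prod_expand: "dim_vec w = n \<Longrightarrow> u \<bullet>c w = (\<Sum>s<n. u $ s * cnj (w $ s))"
  by (simp add: scalar_prod_def atLeast0LessThan)

lemma orthonormal_basis_dim: "orthonormal_basis d e \<Longrightarrow> k < d \<Longrightarrow> dim_vec (e k) = d"
  by (auto simp: orthonormal_basis_def)

lemma orthonormal_basis_cscalar_prod:
  "orthonormal_basis d e \<Longrightarrow> a < d \<Longrightarrow> b < d \<Longrightarrow> e a \<bullet>c e b = (if a = b then 1 else 0)"
  unfolding orthonormal_basis_def by blast

lemma orthonormal_basis_inner:
  assumes "orthonormal_basis d e" "a < d" "b < d"
  shows "(\<Sum>s<d. e a $ s * cnj (e b $ s)) = (if a = b then 1 else 0)"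
  using orthonormal_basis_cscalar_prod[OF assms]
  by (simp add: cscalar_prod_expand[OF orthonormal_basis_dim[OF assms(1,3)]])

lemma spectral_dims [simp]: "dim_row (spectral d c e) = d" "dim_col (spectral d c e) = d"
  by (simp_all add: spectral_def)

lemma spectral_index:
  "i < d \<Longrightarrow> j < d \<Longrightarrow>
   spectral d c e $$ (i,j) = (\<Sum>k<d. complex_of_real (c k) * (e k $ i * cnj (e k $ j)))"
  by (simp add: spectral_def)

lemma spectral_cong: "(\<And>k. k < d \<Longrightarrow> c k = c' k) \<Longrightarrow> spectral d c e = spectral d c' e"
  by (simp add: spectral_def)

lemma spectral_mult_vec_basis:
  assumes e: "orthonormal_basis d e" and b: "b < d"
  shows "spectral d c e *\<^sub>v e b = complex_of_real (c b) \<cdot>\<^sub>v e b"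
proof (rule eq_vecI)
  fix i assume "i < dim_vec (complex_of_real (c b) \<cdot>\<^sub>v e b)"
  then have i: "i < d" using orthonormal_basis_dim[OF e b] by simp
  have "(spectral d c e *\<^sub>v e b) $ i
      = (\<Sum>s<d. (\<Sum>k<d. complex_of_real (c k) * (e k $ i * cnj (e k $ s))) * e b $ s)"
    using i orthonormal_basis_dim[OF e b] by (simp add: spectral_index scalar_prod_def atLeast0LessThan)
  also have "\<dots> = (\<Sum>k<d. complex_of_real (c k) * e k $ i * (\<Sum>s<d. e b $ s * cnj (e k $ s)))"
    unfolding sum_distrib_left sum_distrib_right by (subst sum.swap) (simp add: mult_ac)
  also have "\<dots> = complex_of_real (c b) * e b $ i"
    using b by (simp add: orthonormal_basis_inner[OF e] if_distrib cong: if_cong)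
  finally show "(spectral d c e *\<^sub>v e b) $ i = (complex_of_real (c b) \<cdot>\<^sub>v e b) $ i"
    using i orthonormal_basis_dim[OF e b] by simp
qed (use orthonormal_basis_dim[OF e b] in simp)

lemma braket_spectral:
  assumes e: "orthonormal_basis d e" and a: "a < d" and b: "b < d"
  shows "braket (e a) (spectral d c e) (e b) = (if a = b then complex_of_real (c a) else 0)"
proof -
  have "braket (e a) (spectral d c e) (e b) = complex_of_real (c b) * (e b \<bullet>c e a)"
    unfolding braket_def spectral_mult_vec_basis[OF e b]
    using orthonormal_basis_dim[OF e a] orthonormal_basis_dim[OF e b]
    by simp
  then show ?thesis by (simp add: orthonormal_basis_cscalar_prod[OF e b a])
qed

lemma passive_wrt_spectral:
  assumes e: "orthonormal_basis d e" and c: "\<And>a b. a < b \<Longrightarrow> b < d \<Longrightarrow> c b \<le> c a"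
  shows "passive_wrt d e (spectral d c e)"
  using c by (simp add: passive_wrt_def braket_spectral[OF e])

lemma spectral_diff: "spectral d c e - spectral d g e = spectral d (\<lambda>k. c k - g k) e"
  by (rule eq_matI) (auto simp: spectral_index sum_subtractf[symmetric] algebra_simps)

lemma spectral_mult:
  assumes e: "orthonormal_basis d e"
  shows "spectral d a e * spectral d b e = spectral d (\<lambda>k. a k * b k) e"
proof (rule eq_matI)
  fix i j assume "i < dim_row (spectral d (\<lambda>k. a k * b k) e)" "j < dim_col (spectral d (\<lambda>k. a k * b k) e)"
  then have i: "i < d" and j: "j < d" by auto
  define F where "F s k k' = complex_of_real (a k) * complex_of_real (b k') * e k $ i * cnj (e k' $ j) *
     (e k' $ s * cnj (e k $ s))" for s k k'
  have "(spectral d a e * spectral d b e) $$ (i,j) = (\<Sum>s<d. spectral d a e $$ (i,s) * spectral d b e $$ (s,j))"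
    using i j by (simp add: scalar_prod_def atLeast0LessThan)
  also have "\<dots> = (\<Sum>s<d. \<Sum>k<d. \<Sum>k'<d. F s k k')"
    by (intro sum.cong refl) (use i j in \<open>simp add: spectral_index sum_product F_def mult_ac\<close>)
  also have "\<dots> = (\<Sum>k<d. \<Sum>k'<d. \<Sum>s<d. F s k k')" by (rule sum_swap3)
  also have "\<dots> = (\<Sum>k<d. \<Sum>k'<d. complex_of_real (a k) * complex_of_real (b k') * e k $ i *
      cnj (e k' $ j) * (if k' = k then 1 else 0))"
    by (intro sum.cong refl) (simp add: F_def sum_distrib_left[symmetric] orthonormal_basis_inner[OF e])
  also have "\<dots> = (\<Sum>k<d. complex_of_real (a k * b k) * (e k $ i * cnj (e k $ j)))"
    by (intro sum.cong refl) (simp add: if_distrib[of "\<lambda>x. _ * x"] mult_ac cong: if_cong)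
  also have "\<dots> = spectral d (\<lambda>k. a k * b k) e $$ (i,j)" using i j by (simp add: spectral_index)
  finally show "(spectral d a e * spectral d b e) $$ (i,j) = spectral d (\<lambda>k. a k * b k) e $$ (i,j)" .
qed auto

lemma mtrace_spectral:
  assumes e: "orthonormal_basis d e"
  shows "mtrace (spectral d c e) = (\<Sum>k<d. complex_of_real (c k))"
proof -
  have "mtrace (spectral d c e) = (\<Sum>i<d. \<Sum>k<d. complex_of_real (c k) * (e k $ i * cnj (e k $ i)))"
    by (simp add: mtrace_def spectral_index)
  also have "\<dots> = (\<Sum>k<d. complex_of_real (c k) * (\<Sum>i<d. e k $ i * cnj (e k $ i)))"
    by (subst sum.swap) (simp add: sum_distrib_left)
  also have "\<dots> = (\<Sum>k<d. complex_of_real (c k))"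
    by (intro sum.cong refl) (simp add: orthonormal_basis_inner[OF e])
  finally show ?thesis .
qed

lemma mult_spectral_mult_adjoint:
  assumes M: "M \<in> carrier_mat d d" and e: "\<And>k. k < d \<Longrightarrow> dim_vec (e k) = d"
  shows "M * spectral d c e * mat_adjoint M = spectral d c (\<lambda>k. M *\<^sub>v e k)"
proof (rule eq_matI)
  fix i j assume "i < dim_row (spectral d c (\<lambda>k. M *\<^sub>v e k))" "j < dim_col (spectral d c (\<lambda>k. M *\<^sub>v e k))"
  then have i: "i < d" and j: "j < d" by auto
  define F where "F k s t = complex_of_real (c k) * M $$ (i,s) * e k $ s * (cnj (e k $ t) * cnj (M $$ (j,t)))"
    for k s t
  have dM: "dim_row M = d" "dim_col M = d" using M by auto
  have Mv: "(M *\<^sub>v e k) $ i' = (\<Sum>s<d. M $$ (i',s) * e k $ s)" if "i' < d" "k < d" for i' k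
    using that dM e by (simp add: scalar_prod_def atLeast0LessThan)
  have "(M * spectral d c e * mat_adjoint M) $$ (i,j) =
     (\<Sum>t<d. (\<Sum>s<d. M $$ (i,s) * spectral d c e $$ (s,t)) * cnj (M $$ (j,t)))"
    using i j dM by (simp add: scalar_prod_def atLeast0LessThan mat_adjoint_index)
  also have "\<dots> = (\<Sum>t<d. \<Sum>s<d. \<Sum>k<d. F k s t)"
    by (simp add: spectral_index F_def sum_distrib_left sum_distrib_right mult_ac)
  also have "\<dots> = (\<Sum>s<d. \<Sum>k<d. \<Sum>t<d. F k s t)"
    by (rule sum_swap3)
  also have "\<dots> = (\<Sum>k<d. \<Sum>t<d. \<Sum>s<d. F k s t)"
    by (rule sum_swap3)
  also have "\<dots> = (\<Sum>k<d. complex_of_real (c k) * ((M *\<^sub>v e k) $ i * cnj ((M *\<^sub>v e k) $ j)))"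
  proof (rule sum.cong[OF refl])
    fix k assume "k \<in> {..<d}"
    then show "(\<Sum>t<d. \<Sum>s<d. F k s t) = complex_of_real (c k) * ((M *\<^sub>v e k) $ i * cnj ((M *\<^sub>v e k) $ j))"
      by (simp add: Mv i j F_def cnj_sum sum_product sum_distrib_left mult_ac)
  qed
  also have "\<dots> = spectral d c (\<lambda>k. M *\<^sub>v e k) $$ (i,j)"
    using i j by (simp add: spectral_index)
  finally show "(M * spectral d c e * mat_adjoint M) $$ (i,j) = spectral d c (\<lambda>k. M *\<^sub>v e k) $$ (i,j)" .
qed (use M in auto)

lemma swap_unitary_carrier:
  "dim_vec a = n \<Longrightarrow> dim_vec b = n \<Longrightarrow> swap_unitary n a b \<in> carrier_mat n n"
  by (simp add: swap_unitary_def ketbra_def)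

lemma swap_unitary_mult_vec:
  assumes a: "dim_vec a = n" and b: "dim_vec b = n" and u: "dim_vec u = n"
  shows "swap_unitary n a b *\<^sub>v u =
     u - (u \<bullet>c a) \<cdot>\<^sub>v a - (u \<bullet>c b) \<cdot>\<^sub>v b + (u \<bullet>c b) \<cdot>\<^sub>v a + (u \<bullet>c a) \<cdot>\<^sub>v b"
proof (rule eq_vecI)
  fix i assume "i < dim_vec (u - (u \<bullet>c a) \<cdot>\<^sub>v a - (u \<bullet>c b) \<cdot>\<^sub>v b + (u \<bullet>c b) \<cdot>\<^sub>v a + (u \<bullet>c a) \<cdot>\<^sub>v b)"
  then have i: "i < n" using b by simp
  have "(swap_unitary n a b *\<^sub>v u) $ i = (\<Sum>s<n. swap_unitary n a b $$ (i,s) * u $ s)"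
    using i u by (simp add: swap_unitary_def ketbra_def a b scalar_prod_def atLeast0LessThan)
  also have "\<dots> = (\<Sum>s<n. (if i = s then u $ s else 0) - a $ i * (u $ s * cnj (a $ s))
      - b $ i * (u $ s * cnj (b $ s)) + a $ i * (u $ s * cnj (b $ s)) + b $ i * (u $ s * cnj (a $ s)))"
    by (intro sum.cong refl) (use i in \<open>auto simp: swap_unitary_def ketbra_def a b algebra_simps\<close>)
  also have "\<dots> = (u - (u \<bullet>c a) \<cdot>\<^sub>v a - (u \<bullet>c b) \<cdot>\<^sub>v b + (u \<bullet>c b) \<cdot>\<^sub>v a + (u \<bullet>c a) \<cdot>\<^sub>v b) $ i"
    using i a b u by (simp add: sum.distrib sum_subtractf cscalar_prod_expand sum_distrib_left[symmetric] mult_ac)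
  finally show "(swap_unitary n a b *\<^sub>v u) $ i = \<dots>" .
qed (simp add: swap_unitary_def ketbra_def b)

lemma swap_unitary_mult_vec_basis:
  assumes e: "orthonormal_basis d e" and a: "a < d" and b: "b < d" and k: "k < d"
  shows "swap_unitary d (e a) (e b) *\<^sub>v e k = e (Transposition.transpose a b k)"
  using a b k orthonormal_basis_dim[OF e]
  by (auto simp: swap_unitary_mult_vec orthonormal_basis_cscalar_prod[OF e] transpose_def)

lemma spectral_transpose:
  assumes "a < d" "b < d"
  shows "spectral d c (e \<circ> Transposition.transpose a b) = spectral d (c \<circ> Transposition.transpose a b) e"
proof -
  have "(\<Sum>k<d. complex_of_real (c k) * (e (Transposition.transpose a b k) $ i * cnj (e (Transposition.transpose a b k) $ j)))
      = (\<Sum>k<d. complex_of_real (c (Transposition.transpose a b k)) * (e k $ i * cnj (e k $ j)))" for i j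
    by (rule sum.reindex_bij_witness[of _ "Transposition.transpose a b" "Transposition.transpose a b"])
      (use assms in \<open>auto simp: transpose_def\<close>)
  then show ?thesis by (intro eq_matI) (simp_all add: spectral_index)
qed

lemma swap_unitary_conj_spectral:
  assumes e: "orthonormal_basis d e" and a: "a < d" and b: "b < d"
  shows "swap_unitary d (e a) (e b) * spectral d c e * mat_adjoint (swap_unitary d (e a) (e b))
       = spectral d (c \<circ> Transposition.transpose a b) e"
proof -
  note dims = orthonormal_basis_dim[OF e]
  have "spectral d c (\<lambda>k. swap_unitary d (e a) (e b) *\<^sub>v e k) = spectral d c (e \<circ> Transposition.transpose a b)"
    unfolding spectral_def by (intro cong_mat refl) (simp add: swap_unitary_mult_vec_basis[OF e a b])
  then show ?thesis
    by (simp add: mult_spectral_mult_adjoint swap_unitary_carrier dims a b spectral_transpose[OF a b])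
qed

section \<open>The product basis\<close>

definition prod_basis :: "nat \<Rightarrow> nat \<Rightarrow> (nat \<Rightarrow> complex vec) \<Rightarrow> (nat \<Rightarrow> complex vec) \<Rightarrow> nat \<Rightarrow> complex vec" where
  "prod_basis dO dR \<phi> \<xi> k = tensor_vec dO dR (\<phi> (k div dR)) (\<xi> (k mod dR))"

lemma prod_basis_dim [simp]: "dim_vec (prod_basis dO dR \<phi> \<xi> k) = dO*dR"
  by (simp add: prod_basis_def tensor_vec_def)

lemma prod_basis_index:
  "x < dO*dR \<Longrightarrow> prod_basis dO dR \<phi> \<xi> k $ x = \<phi> (k div dR) $ (x div dR) * \<xi> (k mod dR) $ (x mod dR)"
  by (simp add: prod_basis_def tensor_vec_def)

lemma prod_basis_index_mult_add:
  "l < dO \<Longrightarrow> m < dR \<Longrightarrow> prod_basis dO dR \<phi> \<xi> k $ (l*dR+m) = \<phi> (k div dR) $ l * \<xi> (k mod dR) $ m"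
  by (simp add: prod_basis_index index_mult_add_less)

lemma orthonormal_basis_prod_basis:
  assumes \<phi>: "orthonormal_basis dO \<phi>" and \<xi>: "orthonormal_basis dR \<xi>"
  shows "orthonormal_basis (dO*dR) (prod_basis dO dR \<phi> \<xi>)"
  unfolding orthonormal_basis_def
proof (intro conjI allI impI)
  fix k show "prod_basis dO dR \<phi> \<xi> k \<in> carrier_vec (dO*dR)" by (rule carrier_vecI) simp
next
  fix a b assume a: "a < dO*dR" and b: "b < dO*dR"
  then have "0 < dR" by (cases dR) auto
  then have ab: "a div dR < dO" "a mod dR < dR" "b div dR < dO" "b mod dR < dR"
    using less_mult_imp_div_less[OF a] less_mult_imp_div_less[OF b] by auto
  have "prod_basis dO dR \<phi> \<xi> a \<bullet>c prod_basis dO dR \<phi> \<xi> b =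
      (\<Sum>l<dO. \<phi> (a div dR) $ l * cnj (\<phi> (b div dR) $ l)) *
      (\<Sum>m<dR. \<xi> (a mod dR) $ m * cnj (\<xi> (b mod dR) $ m))"
    unfolding cscalar_prod_expand[OF prod_basis_dim] sum_lessThan_mult_split sum_product
    by (intro sum.cong refl) (simp add: prod_basis_index_mult_add mult_ac)
  also have "\<dots> = (if a = b then 1 else 0)"
    using ab by (simp add: orthonormal_basis_inner[OF \<phi>] orthonormal_basis_inner[OF \<xi>])
      (metis div_mult_mod_eq)
  finally show "prod_basis dO dR \<phi> \<xi> a \<bullet>c prod_basis dO dR \<phi> \<xi> b = (if a = b then 1 else 0)" .
qed

lemma tensor_mat_spectral:
  assumes "0 < dR"
  shows "tensor_mat dO dR (spectral dO c \<phi>) (spectral dR r \<xi>) =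
     spectral (dO*dR) (\<lambda>k. c (k div dR) * r (k mod dR)) (prod_basis dO dR \<phi> \<xi>)"
proof (rule eq_matI)
  fix x y assume "x < dim_row (spectral (dO*dR) (\<lambda>k. c (k div dR) * r (k mod dR)) (prod_basis dO dR \<phi> \<xi>))"
    "y < dim_col (spectral (dO*dR) (\<lambda>k. c (k div dR) * r (k mod dR)) (prod_basis dO dR \<phi> \<xi>))"
  then have x: "x < dO*dR" and y: "y < dO*dR" by auto
  have xy: "x div dR < dO" "y div dR < dO" "x mod dR < dR" "y mod dR < dR"
    using less_mult_imp_div_less[OF x] less_mult_imp_div_less[OF y] assms by auto
  have "spectral (dO*dR) (\<lambda>k. c (k div dR) * r (k mod dR)) (prod_basis dO dR \<phi> \<xi>) $$ (x,y) =
    (\<Sum>l<dO. complex_of_real (c l) * (\<phi> l $ (x div dR) * cnj (\<phi> l $ (y div dR)))) *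
    (\<Sum>m<dR. complex_of_real (r m) * (\<xi> m $ (x mod dR) * cnj (\<xi> m $ (y mod dR))))"
    using x y by (simp add: spectral_index sum_lessThan_mult_split prod_basis_index sum_product mult_ac)
  also have "\<dots> = tensor_mat dO dR (spectral dO c \<phi>) (spectral dR r \<xi>) $$ (x,y)"
    using x y xy by (simp add: tensor_mat_def spectral_index)
  finally show "tensor_mat dO dR (spectral dO c \<phi>) (spectral dR r \<xi>) $$ (x,y) =
      spectral (dO*dR) (\<lambda>k. c (k div dR) * r (k mod dR)) (prod_basis dO dR \<phi> \<xi>) $$ (x,y)" by simp
qed (simp_all add: tensor_mat_def)

lemma ptrace_R_spectral:
  assumes \<xi>: "orthonormal_basis dR \<xi>"
  shows "ptrace_R dO dR (spectral (dO*dR) P (prod_basis dO dR \<phi> \<xi>)) =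
     spectral dO (\<lambda>l. \<Sum>m<dR. P (l*dR+m)) \<phi>"
proof (rule eq_matI)
  fix i j assume "i < dim_row (spectral dO (\<lambda>l. \<Sum>m<dR. P (l*dR+m)) \<phi>)"
    "j < dim_col (spectral dO (\<lambda>l. \<Sum>m<dR. P (l*dR+m)) \<phi>)"
  then have i: "i < dO" and j: "j < dO" by auto
  define F where "F m l m' = complex_of_real (P (l*dR+m')) * (\<phi> l $ i * cnj (\<phi> l $ j)) *
      (\<xi> m' $ m * cnj (\<xi> m' $ m))" for m l m'
  have "ptrace_R dO dR (spectral (dO*dR) P (prod_basis dO dR \<phi> \<xi>)) $$ (i,j) =
     (\<Sum>m<dR. spectral (dO*dR) P (prod_basis dO dR \<phi> \<xi>) $$ (i*dR+m, j*dR+m))"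
    using i j by (simp add: ptrace_R_def)
  also have "\<dots> = (\<Sum>m<dR. \<Sum>l<dO. \<Sum>m'<dR. F m l m')"
  proof (rule sum.cong[OF refl])
    fix m assume "m \<in> {..<dR}"
    then have m: "m < dR" by simp
    show "spectral (dO*dR) P (prod_basis dO dR \<phi> \<xi>) $$ (i*dR+m, j*dR+m) = (\<Sum>l<dO. \<Sum>m'<dR. F m l m')"
      unfolding spectral_index[OF index_mult_add_less[OF i m] index_mult_add_less[OF j m]]
      by (simp add: i j m sum_lessThan_mult_split prod_basis_index_mult_add) (simp add: F_def mult_ac)
  qed
  also have "\<dots> = (\<Sum>l<dO. \<Sum>m'<dR. \<Sum>m<dR. F m l m')" by (rule sum_swap3)
  also have "\<dots> = spectral dO (\<lambda>l. \<Sum>m<dR. P (l*dR+m)) \<phi> $$ (i,j)"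
    using i j by (simp add: F_def sum_distrib_left[symmetric] orthonormal_basis_inner[OF \<xi>]
        spectral_index sum_distrib_right)
  finally show "ptrace_R dO dR (spectral (dO*dR) P (prod_basis dO dR \<phi> \<xi>)) $$ (i,j) =
     spectral dO (\<lambda>l. \<Sum>m<dR. P (l*dR+m)) \<phi> $$ (i,j)" .
qed (simp_all add: ptrace_R_def)

lemma ptrace_O_spectral:
  assumes \<phi>: "orthonormal_basis dO \<phi>"
  shows "ptrace_O dO dR (spectral (dO*dR) P (prod_basis dO dR \<phi> \<xi>)) =
     spectral dR (\<lambda>m. \<Sum>l<dO. P (l*dR+m)) \<xi>"
proof (rule eq_matI)
  fix i j assume "i < dim_row (spectral dR (\<lambda>m. \<Sum>l<dO. P (l*dR+m)) \<xi>)"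
    "j < dim_col (spectral dR (\<lambda>m. \<Sum>l<dO. P (l*dR+m)) \<xi>)"
  then have i: "i < dR" and j: "j < dR" by auto
  define F where "F l l' m = complex_of_real (P (l'*dR+m)) * (\<xi> m $ i * cnj (\<xi> m $ j)) *
      (\<phi> l' $ l * cnj (\<phi> l' $ l))" for l l' m
  have "ptrace_O dO dR (spectral (dO*dR) P (prod_basis dO dR \<phi> \<xi>)) $$ (i,j) =
     (\<Sum>l<dO. spectral (dO*dR) P (prod_basis dO dR \<phi> \<xi>) $$ (l*dR+i, l*dR+j))"
    using i j by (simp add: ptrace_O_def)
  also have "\<dots> = (\<Sum>l<dO. \<Sum>l'<dO. \<Sum>m<dR. F l l' m)"
  proof (rule sum.cong[OF refl])
    fix l assume "l \<in> {..<dO}"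
    then have l: "l < dO" by simp
    show "spectral (dO*dR) P (prod_basis dO dR \<phi> \<xi>) $$ (l*dR+i, l*dR+j) = (\<Sum>l'<dO. \<Sum>m<dR. F l l' m)"
      unfolding spectral_index[OF index_mult_add_less[OF l i] index_mult_add_less[OF l j]]
      by (simp add: i j l sum_lessThan_mult_split prod_basis_index_mult_add) (simp add: F_def mult_ac)
  qed
  also have "\<dots> = (\<Sum>m<dR. \<Sum>l'<dO. \<Sum>l<dO. F l l' m)"
    by (subst sum_swap3) (rule sum.swap)
  also have "\<dots> = spectral dR (\<lambda>m. \<Sum>l<dO. P (l*dR+m)) \<xi> $$ (i,j)"
    using i j by (simp add: F_def sum_distrib_left[symmetric] orthonormal_basis_inner[OF \<phi>]
        spectral_index sum_distrib_right)
  finally show "ptrace_O dO dR (spectral (dO*dR) P (prod_basis dO dR \<phi> \<xi>)) $$ (i,j) =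
     spectral dR (\<lambda>m. \<Sum>l<dO. P (l*dR+m)) \<xi> $$ (i,j)" .
qed (simp_all add: ptrace_O_def)

section \<open>States diagonal in the product basis\<close>

(* p l m is the diagonal entry at \<phi> l \<otimes> \<xi> m. The schedule only swaps with rows l \<noteq> 0,
   the only case in which swap_entries is a transposition of two entries. *)
definition swap_entries :: "nat \<Rightarrow> nat \<Rightarrow> nat \<Rightarrow> (nat \<Rightarrow> nat \<Rightarrow> real) \<Rightarrow> nat \<Rightarrow> nat \<Rightarrow> real" where
  "swap_entries i m l p = p(0 := (p 0)(i := p l m), l := (p l)(m := p 0 i))"

fun diag_run :: "(nat \<times> nat \<times> nat) list \<Rightarrow> (nat \<Rightarrow> nat \<Rightarrow> real) \<Rightarrow> (nat \<Rightarrow> nat \<Rightarrow> real) list" where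
  "diag_run [] p = [p]"
| "diag_run ((i,m,l) # ss) p =
     (if p 0 i < p l m then p # diag_run ss (swap_entries i m l p) else diag_run ss p)"

definition flat_entries :: "nat \<Rightarrow> (nat \<Rightarrow> nat \<Rightarrow> real) \<Rightarrow> nat \<Rightarrow> real" where
  "flat_entries dR p k = p (k div dR) (k mod dR)"

definition diag_state :: "nat \<Rightarrow> nat \<Rightarrow> (nat \<Rightarrow> complex vec) \<Rightarrow> (nat \<Rightarrow> complex vec)
    \<Rightarrow> (nat \<Rightarrow> nat \<Rightarrow> real) \<Rightarrow> complex mat" where
  "diag_state dO dR \<phi> \<xi> p = spectral (dO*dR) (flat_entries dR p) (prod_basis dO dR \<phi> \<xi>)"

lemma swap_entries_apply:
  "l \<noteq> 0 \<Longrightarrow> swap_entries i m l p x y =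
     (if x = 0 \<and> y = i then p l m else if x = l \<and> y = m then p 0 i else p x y)"
  by (simp add: swap_entries_def)

lemma hd_diag_run: "diag_run ss p \<noteq> [] \<and> hd (diag_run ss p) = p"
  by (induction ss p rule: diag_run.induct) auto

lemma flat_entries_swap_entries:
  assumes i: "i < dR" and m: "m < dR" and l: "l \<noteq> 0"
  shows "flat_entries dR (swap_entries i m l p) = flat_entries dR p \<circ> Transposition.transpose i (l*dR+m)"
proof
  fix k
  have "k = i \<longleftrightarrow> k div dR = 0 \<and> k mod dR = i" "k = l*dR+m \<longleftrightarrow> k div dR = l \<and> k mod dR = m"
    using eq_mult_add_iff[OF i, of k 0] eq_mult_add_iff[OF m, of k l] by simp_all
  moreover have "l*dR+m \<noteq> i" using i l eq_mult_add_iff[OF i, of "l*dR+m" 0] by simp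
  ultimately show "flat_entries dR (swap_entries i m l p) k = (flat_entries dR p \<circ> Transposition.transpose i (l*dR+m)) k"
    using i m l by (auto simp: flat_entries_def swap_entries_apply transpose_def)
qed

lemma swap_run_diag_state:
  assumes \<phi>: "orthonormal_basis dO \<phi>" and \<xi>: "orthonormal_basis dR \<xi>"
    and steps: "\<forall>(i,m,l)\<in>set ss. i < dR \<and> m < dR \<and> 1 \<le> l \<and> l < dO"
  shows "swap_run dO dR \<phi> \<xi> ss (diag_state dO dR \<phi> \<xi> p) = map (diag_state dO dR \<phi> \<xi>) (diag_run ss p)"
  using steps
proof (induction ss arbitrary: p)
  case (Cons s ss)
  obtain i m l where s: "s = (i,m,l)" by (cases s)
  have i: "i < dR" and m: "m < dR" and l: "1 \<le> l" "l < dO" using Cons.prems s by auto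
  have ia: "i < dO*dR" and ib: "l*dR+m < dO*dR"
    using index_mult_add_less[of 0 dO i dR] index_mult_add_less[OF l(2) m] l(2) i by auto
  note onb = orthonormal_basis_prod_basis[OF \<phi> \<xi>]
  have a: "tensor_vec dO dR (\<phi> 0) (\<xi> i) = prod_basis dO dR \<phi> \<xi> i"
    and b: "tensor_vec dO dR (\<phi> l) (\<xi> m) = prod_basis dO dR \<phi> \<xi> (l*dR+m)"
    using i m by (simp_all add: prod_basis_def)
  have "Re (braket (prod_basis dO dR \<phi> \<xi> k) (diag_state dO dR \<phi> \<xi> p) (prod_basis dO dR \<phi> \<xi> k))
      = flat_entries dR p k" if "k < dO*dR" for k
    using that by (simp add: diag_state_def braket_spectral[OF onb])
  then have diag: "Re (braket (prod_basis dO dR \<phi> \<xi> i) (diag_state dO dR \<phi> \<xi> p) (prod_basis dO dR \<phi> \<xi> i)) = p 0 i"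
    "Re (braket (prod_basis dO dR \<phi> \<xi> (l*dR+m)) (diag_state dO dR \<phi> \<xi> p) (prod_basis dO dR \<phi> \<xi> (l*dR+m))) = p l m"
    using ia ib i m by (simp_all add: flat_entries_def)
  have conj: "swap_unitary (dO*dR) (prod_basis dO dR \<phi> \<xi> i) (prod_basis dO dR \<phi> \<xi> (l*dR+m)) *
      diag_state dO dR \<phi> \<xi> p *
      mat_adjoint (swap_unitary (dO*dR) (prod_basis dO dR \<phi> \<xi> i) (prod_basis dO dR \<phi> \<xi> (l*dR+m)))
      = diag_state dO dR \<phi> \<xi> (swap_entries i m l p)"
    using l by (simp add: diag_state_def swap_unitary_conj_spectral[OF onb ia ib] flat_entries_swap_entries[OF i m])
  show ?case
    using Cons.prems by (simp add: s a b diag conj Cons.IH)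
qed simp

lemma ptrace_R_diag_state:
  "orthonormal_basis dR \<xi> \<Longrightarrow>
   ptrace_R dO dR (diag_state dO dR \<phi> \<xi> p) = spectral dO (\<lambda>l. \<Sum>m<dR. p l m) \<phi>"
  by (simp add: diag_state_def ptrace_R_spectral flat_entries_def)

lemma ptrace_O_diag_state:
  "orthonormal_basis dO \<phi> \<Longrightarrow>
   ptrace_O dO dR (diag_state dO dR \<phi> \<xi> p) = spectral dR (\<lambda>m. \<Sum>l<dO. p l m) \<xi>"
  unfolding diag_state_def by (simp add: ptrace_O_spectral flat_entries_def cong: spectral_cong)

lemma heat_diag_state:
  assumes "orthonormal_basis dO \<phi>" "orthonormal_basis dR \<xi>"
  shows "Re (mtrace (spectral dR E \<xi> * (ptrace_O dO dR (diag_state dO dR \<phi> \<xi> p) - spectral dR r \<xi>)))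
    = (\<Sum>l<dO. \<Sum>m<dR. E m * p l m) - (\<Sum>m<dR. E m * r m)"
  using assms
  by (simp add: ptrace_O_diag_state spectral_diff spectral_mult mtrace_spectral algebra_simps
      sum_subtractf sum_distrib_left sum.swap[of _ "{..<dO}" "{..<dR}"])

section \<open>The swap schedule on the array of diagonal entries\<close>

locale swap_schedule =
  fixes dO dR :: nat and w :: "nat \<Rightarrow> real" and p0 :: "nat \<Rightarrow> nat \<Rightarrow> real"
  assumes weight_mono: "\<And>m m'. m \<le> m' \<Longrightarrow> m' < dR \<Longrightarrow> w m \<le> w m'"
    and top_row_dominates: "\<And>i m l. 1 \<le> l \<Longrightarrow> l < dO \<Longrightarrow> i \<le> m \<Longrightarrow> m < dR \<Longrightarrow> p0 l m \<le> p0 0 i"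
begin

definition row_sum :: "(nat \<Rightarrow> nat \<Rightarrow> real) \<Rightarrow> nat \<Rightarrow> real" where
  "row_sum p l = (\<Sum>m<dR. p l m)"

definition row_energy :: "(nat \<Rightarrow> nat \<Rightarrow> real) \<Rightarrow> nat \<Rightarrow> real" where
  "row_energy p l = (\<Sum>m<dR. w m * p l m)"

definition energy :: "(nat \<Rightarrow> nat \<Rightarrow> real) \<Rightarrow> real" where
  "energy p = (\<Sum>l<dO. row_energy p l)"

definition admissible :: "(nat \<Rightarrow> nat \<Rightarrow> real) \<Rightarrow> bool" where
  "admissible p \<longleftrightarrow> (\<forall>m<dR. \<forall>l l'. 1 \<le> l \<longrightarrow> l \<le> l' \<longrightarrow> l' < dO \<longrightarrow> p l' m \<le> p l m) \<and>
     (1 < dO \<longrightarrow> row_sum p 1 \<le> row_sum p 0)"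

definition monotone_run :: "(nat \<Rightarrow> nat \<Rightarrow> real) list \<Rightarrow> bool" where
  "monotone_run R \<longleftrightarrow> sorted (map (\<lambda>p. row_sum p 0) R) \<and> sorted (map energy R) \<and> (\<forall>p\<in>set R. admissible p)"

(* Invariant of stage i of the outer loop: the entries the stage has not reached yet still hold
   their initial values. With top_row_dominates it forces m < i for every swap of the stage. *)
definition untouched :: "nat \<Rightarrow> (nat \<Rightarrow> nat \<Rightarrow> real) \<Rightarrow> bool" where
  "untouched i p \<longleftrightarrow> (\<forall>i'. i < i' \<longrightarrow> i' < dR \<longrightarrow> p 0 i' = p0 0 i') \<and>
     (\<forall>l m. 1 \<le> l \<longrightarrow> l < dO \<longrightarrow> i \<le> m \<longrightarrow> m < dR \<longrightarrow> p l m = p0 l m)"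

lemma admissible_row_sum_antimono:
  assumes p: "admissible p" and ab: "a < b" "b < dO"
  shows "row_sum p b \<le> row_sum p a"
proof -
  have below_top: "row_sum p b \<le> row_sum p l" if "1 \<le> l" "l \<le> b" for l
    unfolding row_sum_def using p that ab by (intro sum_mono) (auto simp: admissible_def)
  show ?thesis
  proof (cases "a = 0")
    case True
    then show ?thesis using below_top[of 1] ab p by (auto simp: admissible_def)
  qed (use below_top[of a] ab in auto)
qed

lemma monotone_run_Cons:
  assumes "monotone_run R" "R \<noteq> []" "admissible p"
    "row_sum p 0 \<le> row_sum (hd R) 0" "energy p \<le> energy (hd R)"
  shows "monotone_run (p # R)"
  using assms by (cases R) (auto simp: monotone_run_def intro: order_trans)

lemma monotone_run_single: "admissible p \<Longrightarrow> monotone_run [p]"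
  by (simp add: monotone_run_def)

lemma monotone_run_nth:
  assumes "monotone_run R" "j \<le> k" "k < length R"
  shows "row_sum (R ! j) 0 \<le> row_sum (R ! k) 0" "energy (R ! j) \<le> energy (R ! k)"
  using assms sorted_nth_mono[of "map (\<lambda>p. row_sum p 0) R" j k] sorted_nth_mono[of "map energy R" j k]
  by (auto simp: monotone_run_def)

lemma passive_ptrace_R_diag_state:
  assumes "orthonormal_basis dO \<phi>" "orthonormal_basis dR \<xi>" "admissible p"
  shows "passive_wrt dO \<phi> (ptrace_R dO dR (diag_state dO dR \<phi> \<xi> p))"
  using assms admissible_row_sum_antimono
  by (simp add: ptrace_R_diag_state passive_wrt_spectral row_sum_def)

lemma row_sum_swap_entries:
  assumes i: "i < dR" and m: "m < dR" and L: "L \<noteq> 0"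
  shows "row_sum (swap_entries i m L p) 0 = row_sum p 0 - p 0 i + p L m"
    and "row_sum (swap_entries i m L p) L = row_sum p L - p L m + p 0 i"
    and "x \<noteq> 0 \<Longrightarrow> x \<noteq> L \<Longrightarrow> row_sum (swap_entries i m L p) x = row_sum p x"
  using i m L by (simp_all add: row_sum_def swap_entries_apply sum_update_at)

lemma energy_swap_entries:
  assumes i: "i < dR" and m: "m < dR" and L: "L \<noteq> 0" "L < dO"
  shows "energy (swap_entries i m L p) = energy p + (w i - w m) * (p L m - p 0 i)"
proof -
  have top: "row_energy (swap_entries i m L p) 0 = row_energy p 0 - w i * p 0 i + w i * p L m"
    and row: "row_energy (swap_entries i m L p) L = row_energy p L - w m * p L m + w m * p 0 i"
    using i m L by (simp_all add: row_energy_def swap_entries_apply if_distrib[of "\<lambda>x. w _ * x"]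
        sum_update_at cong: if_cong)
  have rest: "sum (row_energy (swap_entries i m L p)) ({..<dO} - {0, L}) = sum (row_energy p) ({..<dO} - {0, L})"
    using L by (intro sum.cong) (auto simp: row_energy_def swap_entries_apply)
  show ?thesis
    unfolding energy_def using L by (simp add: sum_remove2[of "{..<dO}" 0 L] top row rest algebra_simps)
qed

lemma swap_only_below_diagonal:
  assumes p: "untouched i p" "i \<le> m \<longrightarrow> p 0 i = p0 0 i" and L: "1 \<le> L" "L < dO" and m: "m < dR"
    and swap: "p 0 i < p L m"
  shows "m < i"
proof (rule ccontr)
  assume "\<not> m < i"
  then have "p L m \<le> p 0 i" using p L m top_row_dominates[of L i m] by (auto simp: untouched_def)
  then show False using swap by simp
qed

lemma untouched_swap_entries:
  "untouched i p \<Longrightarrow> m < i \<Longrightarrow> L \<noteq> 0 \<Longrightarrow> untouched i (swap_entries i m L p)"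
  by (auto simp: untouched_def swap_entries_apply)

lemma admissible_swap_entries:
  assumes p: "admissible p" and i: "i < dR" and m: "m < dR" and mi: "m < i" and L: "1 \<le> L" "L < dO"
    and carry: "Suc L < dO \<longrightarrow> p (Suc L) m \<le> p 0 i" and swap: "p 0 i < p L m"
  shows "admissible (swap_entries i m L p)"
proof -
  have col: "p l' m' \<le> p l m'" if "m' < dR" "1 \<le> l" "l \<le> l'" "l' < dO" for m' l l'
    using p that by (auto simp: admissible_def)
  have below: "p l' m \<le> p 0 i" if "L < l'" "l' < dO" for l'
    using col[OF m, of "Suc L" l'] carry that by force
  have above: "p 0 i \<le> p l m" if "1 \<le> l" "l < L" for l
    using col[OF m, of l L] swap that L by force
  have "row_sum (swap_entries i m L p) 1 \<le> row_sum (swap_entries i m L p) 0" if "1 < dO"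
  proof -
    have "row_sum (swap_entries i m L p) 1 \<le> row_sum p 1"
      using row_sum_swap_entries[OF i m, where L=L and p=p] L swap by (cases "L = 1") auto
    also have "\<dots> \<le> row_sum p 0" using p that by (simp add: admissible_def)
    also have "\<dots> \<le> row_sum (swap_entries i m L p) 0"
      using row_sum_swap_entries(1)[OF i m, where L=L and p=p] L swap by simp
    finally show ?thesis .
  qed
  moreover have "swap_entries i m L p l' m' \<le> swap_entries i m L p l m'"
    if "m' < dR" "1 \<le> l" "l \<le> l'" "l' < dO" for m' l l'
    using that col[OF that] below above swap L mi by (auto simp: swap_entries_apply)
  ultimately show ?thesis by (simp add: admissible_def)
qed

lemma swap_step:
  assumes i: "i < dR" and m: "m < dR" and L: "1 \<le> L" "L < dO"
    and p: "admissible p" "untouched i p" "i \<le> m \<longrightarrow> p 0 i = p0 0 i"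
    and carry: "Suc L < dO \<longrightarrow> p (Suc L) m \<le> p 0 i" and swap: "p 0 i < p L m"
  shows "m < i" "admissible (swap_entries i m L p)" "untouched i (swap_entries i m L p)"
    "row_sum p 0 \<le> row_sum (swap_entries i m L p) 0" "energy p \<le> energy (swap_entries i m L p)"
proof -
  show mi: "m < i" using swap_only_below_diagonal[OF p(2,3) L m swap] .
  show "admissible (swap_entries i m L p)" using admissible_swap_entries[OF p(1) i m mi L carry swap] .
  show "untouched i (swap_entries i m L p)" using untouched_swap_entries[OF p(2) mi] L by simp
  show "row_sum p 0 \<le> row_sum (swap_entries i m L p) 0"
    using row_sum_swap_entries(1)[OF i m, where L=L and p=p] L swap by simp
  have "w m \<le> w i" using weight_mono[of m i] mi i by simp
  then show "energy p \<le> energy (swap_entries i m L p)"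
    using energy_swap_entries[OF i m, of L p] L swap by simp
qed

definition column_steps :: "nat \<Rightarrow> nat \<Rightarrow> nat \<Rightarrow> (nat \<times> nat \<times> nat) list" where
  "column_steps i m L = map (\<lambda>l. (i,m,l)) (rev [1..<L])"

definition stage_steps :: "nat \<Rightarrow> nat \<Rightarrow> (nat \<times> nat \<times> nat) list" where
  "stage_steps i M = concat (map (\<lambda>m. column_steps i m dO) (rev [0..<M]))"

(* The loop lemmas take an arbitrary continuation rest, so that they compose. The last premise
   says the entry below the current row of column m is at most p 0 i; it keeps the column sorted. *)
lemma monotone_run_column_steps:
  assumes i: "i < dR" and m: "m < dR"
    and rest: "\<And>q. admissible q \<Longrightarrow> untouched i q \<Longrightarrow> (i \<le> m \<longrightarrow> q 0 i = p0 0 i) \<Longrightarrow>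
      monotone_run (diag_run rest q)"
  shows "L \<le> dO \<Longrightarrow> admissible p \<Longrightarrow> untouched i p \<Longrightarrow> (i \<le> m \<longrightarrow> p 0 i = p0 0 i) \<Longrightarrow>
    (L < dO \<longrightarrow> p L m \<le> p 0 i) \<Longrightarrow> monotone_run (diag_run (column_steps i m L @ rest) p)"
proof (induction L arbitrary: p)
  case 0
  then show ?case by (simp add: column_steps_def rest)
next
  case (Suc L)
  show ?case
  proof (cases "L = 0")
    case True
    then show ?thesis using Suc.prems by (simp add: column_steps_def rest)
  next
    case False
    then have L: "1 \<le> L" "L < dO" using Suc.prems(1) by auto
    have steps: "column_steps i m (Suc L) @ rest = (i,m,L) # column_steps i m L @ rest"
      using L by (simp add: column_steps_def)
    have carry: "Suc L < dO \<longrightarrow> p (Suc L) m \<le> p 0 i" using Suc.prems(5) by simp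
    show ?thesis
    proof (cases "p 0 i < p L m")
      case True
      note step = swap_step[OF i m L Suc.prems(2-4) carry True]
      have "monotone_run (diag_run (column_steps i m L @ rest) (swap_entries i m L p))"
        using Suc.IH Suc.prems(1) step L True by (simp add: swap_entries_apply)
      then show ?thesis
        unfolding steps using True step Suc.prems(2) hd_diag_run by (simp add: monotone_run_Cons)
    next
      case False
      then show ?thesis unfolding steps using Suc.IH Suc.prems by simp
    qed
  qed
qed

lemma monotone_run_stage_steps:
  assumes i: "i < dR"
    and rest: "\<And>q. admissible q \<Longrightarrow> untouched i q \<Longrightarrow> monotone_run (diag_run rest q)"
  shows "M \<le> dR \<Longrightarrow> admissible p \<Longrightarrow> untouched i p \<Longrightarrow> (i < M \<longrightarrow> p 0 i = p0 0 i) \<Longrightarrow>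
    monotone_run (diag_run (stage_steps i M @ rest) p)"
proof (induction M arbitrary: p)
  case 0
  then show ?case by (simp add: stage_steps_def rest)
next
  case (Suc M)
  have steps: "stage_steps i (Suc M) @ rest = column_steps i M dO @ (stage_steps i M @ rest)"
    by (simp add: stage_steps_def)
  show ?case
    unfolding steps using Suc.prems Suc.IH
    by (intro monotone_run_column_steps[OF i]) auto
qed

lemma monotone_run_stages:
  "admissible p \<Longrightarrow> untouched K p \<Longrightarrow> (K < dR \<longrightarrow> p 0 K = p0 0 K) \<Longrightarrow>
    monotone_run (diag_run (concat (map (\<lambda>i. stage_steps i dR) [K..<dR])) p)"
proof (induction "dR - K" arbitrary: K p)
  case 0
  then show ?case by (simp add: monotone_run_single)
next
  case (Suc x)
  then have K: "K < dR" by simp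
  have steps: "concat (map (\<lambda>i. stage_steps i dR) [K..<dR]) =
      stage_steps K dR @ concat (map (\<lambda>i. stage_steps i dR) [Suc K..<dR])"
    using K by (simp add: upt_conv_Cons)
  have "monotone_run (diag_run (concat (map (\<lambda>i. stage_steps i dR) [Suc K..<dR])) q)"
    if "admissible q" "untouched K q" for q
    using Suc.hyps(1)[of "Suc K"] Suc.hyps(2) that by (auto simp: untouched_def)
  then show ?case
    unfolding steps using Suc.prems K by (intro monotone_run_stage_steps) auto
qed

lemma monotone_run_swap_steps:
  assumes "admissible p0"
  shows "monotone_run (diag_run (swap_steps dO dR) p0)"
proof -
  have "swap_steps dO dR = concat (map (\<lambda>i. stage_steps i dR) [1..<dR])"
    by (simp add: swap_steps_def stage_steps_def column_steps_def)
  then show ?thesis using assms by (simp add: monotone_run_stages untouched_def)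
qed

end

lemma gibbs_weights_nonneg: "0 \<le> gibbs_weights dR \<beta> E m"
  unfolding gibbs_weights_def by (intro divide_nonneg_nonneg sum_nonneg) auto

lemma gibbs_weights_antimono:
  assumes "0 \<le> \<beta>" "E m \<le> E m'"
  shows "gibbs_weights dR \<beta> E m' \<le> gibbs_weights dR \<beta> E m"
  unfolding gibbs_weights_def
  using assms by (intro divide_right_mono sum_nonneg) (auto simp: mult_left_mono)

theorem lemma4:
  fixes dO dR :: nat and \<phi> \<xi> :: "nat \<Rightarrow> complex vec" and oc E :: "nat \<Rightarrow> real" and \<beta> :: real
  assumes "dO \<ge> 1" and "dR \<ge> 1"
    and "orthonormal_basis dO \<phi>" and "orthonormal_basis dR \<xi>"
    and "\<And>m m'. m \<le> m' \<Longrightarrow> m' < dR \<Longrightarrow> E m \<le> E m'"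
    and "\<beta> > 0"
    and "\<And>l l'. l \<le> l' \<Longrightarrow> l' < dO \<Longrightarrow> oc l' \<le> oc l"
    and "\<And>l. l < dO \<Longrightarrow> oc l \<ge> 0" and "(\<Sum>l<dO. oc l) = 1"
  defines "\<rho>s \<equiv> swap_run dO dR \<phi> \<xi> (swap_steps dO dR)
                 (tensor_mat dO dR (spectral dO oc \<phi>) (spectral dR (gibbs_weights dR \<beta> E) \<xi>))"
    and "pmax \<equiv> sum_largest dR [oc l * gibbs_weights dR \<beta> E m. l \<leftarrow> [0..<dO], m \<leftarrow> [0..<dR]]"
  shows "(\<forall>j k. j \<le> k \<longrightarrow> k < length \<rho>s \<longrightarrow>
            pmax - Re (braket (\<phi> 0) (ptrace_R dO dR (\<rho>s ! k)) (\<phi> 0))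
            \<le> pmax - Re (braket (\<phi> 0) (ptrace_R dO dR (\<rho>s ! j)) (\<phi> 0)))
       \<and> (\<forall>j k. j \<le> k \<longrightarrow> k < length \<rho>s \<longrightarrow>
            Re (mtrace (spectral dR E \<xi> * (ptrace_O dO dR (\<rho>s ! j) - (spectral dR (gibbs_weights dR \<beta> E) \<xi>))))
            \<le> Re (mtrace (spectral dR E \<xi> * (ptrace_O dO dR (\<rho>s ! k) - (spectral dR (gibbs_weights dR \<beta> E) \<xi>)))))
       \<and> (\<forall>j < length \<rho>s. passive_wrt dO \<phi> (ptrace_R dO dR (\<rho>s ! j)))"
proof -
  let ?r = "gibbs_weights dR \<beta> E"
  define p0 where "p0 l m = oc l * ?r m" for l m
  note \<phi> = assms(3) and \<xi> = assms(4)
  have r: "0 \<le> ?r m" "?r m' \<le> ?r m" if "m \<le> m'" "m' < dR" for m m'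
    using gibbs_weights_nonneg gibbs_weights_antimono assms(5,6) that by auto
  interpret swap_schedule dO dR E p0
  proof
    show "p0 l m \<le> p0 0 i" if "1 \<le> l" "l < dO" "i \<le> m" "m < dR" for i m l
      unfolding p0_def using that assms(7,8) r[of i m] r[of m m] by (intro mult_mono) auto
  qed (use assms(5) in auto)
  have "admissible p0"
    unfolding admissible_def row_sum_def p0_def
    using assms(7) gibbs_weights_nonneg by (auto intro!: sum_mono mult_right_mono)
  then have run: "monotone_run (diag_run (swap_steps dO dR) p0)"
    by (rule monotone_run_swap_steps)
  have "tensor_mat dO dR (spectral dO oc \<phi>) (spectral dR ?r \<xi>) = diag_state dO dR \<phi> \<xi> p0"
    using assms(2) by (simp add: tensor_mat_spectral diag_state_def flat_entries_def[abs_def] p0_def)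
  moreover have "\<forall>(i,m,l)\<in>set (swap_steps dO dR). i < dR \<and> m < dR \<and> 1 \<le> l \<and> l < dO"
    by (auto simp: swap_steps_def)
  ultimately have "\<rho>s = map (diag_state dO dR \<phi> \<xi>) (diag_run (swap_steps dO dR) p0)"
    unfolding \<rho>s_def using swap_run_diag_state[OF \<phi> \<xi>] by simp
  then show ?thesis
    using monotone_run_nth[OF run] run passive_ptrace_R_diag_state[OF \<phi> \<xi>] assms(1)
    by (auto simp: ptrace_R_diag_state[OF \<xi>] braket_spectral[OF \<phi>] heat_diag_state[OF \<phi> \<xi>]
        row_sum_def energy_def row_energy_def monotone_run_def)
qed

end
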